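(* Let $\Omega$ be a topological Hausdorff space, $E$ a non-trivial locally convex Hausdorff space over $\mathbb{K}$ and $\mathcal{FV}(\Omega)$ a dom-space such that $\mathcal{FV}(\Omega)\subset\mathcal{C}(\Omega)$ as a linear subspace. If the map $\delta\colon\Omega\to\mathcal{FV}(\Omega)'_\kappa$, $x\mapsto\delta_x$, is continuous, then $S(u)\in\mathcal{C}(\Omega,E)$ for all $u\in\mathcal{FV}(\Omega)\varepsilon E$.
   Context: $\mathbb{K}\in\{\mathbb{R},\mathbb{C}\}$; $\mathcal{C}(\Omega)$ denotes the continuous $\mathbb{K}$-valued functions, $\mathcal{C}(\Omega,E)$ the continuous $E$-valued ones. Framework: $J,M$ non-empty index sets, $(\omega_m)_{m\in M}$ non-empty sets, $\nu_{j,m}\colon\omega_m\to[0,\infty)$ such that for all $m$, $x\in\omega_m$ some $\nu_{j,m}(x)>0$; $\operatorname{AP}(\Omega)\subset\mathbb{K}^\Omega$ a linear subspace; $T_m\colon\operatorname{dom}T_m\to\mathbb{K}^{\omega_m}$ linear maps on linear subspaces of $\mathbb{K}^\Omega$; $\mathcal{FV}(\Omega):=\{f\in\operatorname{AP}(\Omega)\cap\bigcap_m\operatorname{dom}T_m: |f|_{j,m}:=\sup_{x\in\omega_m}|T_m(f)(x)|\nu_{j,m}(x)<\infty\ \forall j,m\}$ with these seminorms. It is a dom-space if it is Hausdorff, the seminorms are directed and every $\delta_x\colon f\mapsto f(x)$, $x\in\Omega$, belongs to $\mathcal{FV}(\Omega)'$. $\mathcal{FV}(\Omega)'_\kappa$: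 dual with the topology of uniform convergence on absolutely convex compact subsets of $\mathcal{FV}(\Omega)$. $\mathcal{FV}(\Omega)\varepsilon E$: continuous linear maps $\mathcal{FV}(\Omega)'_\kappa\to E$ with the topology of uniform convergence on equicontinuous sets; $S(u)(x):=u(\delta_x)$, $x\in\Omega$. *)

theory Defs
  imports "HOL-Analysis.Analysis"
begin

text \<open>Scalar field K: type class real_normed_field (a commutative real normed division
algebra, i.e. R or C up to isomorphism).\<close>

definition fun_subspace :: "('a \<Rightarrow> 'k::field) set \<Rightarrow> bool" where
  "fun_subspace A \<longleftrightarrow> (\<lambda>x. 0) \<in> A \<and> (\<forall>f\<in>A. \<forall>g\<in>A. (\<lambda>x. f x + g x) \<in> A)
      \<and> (\<forall>c. \<forall>f\<in>A. (\<lambda>x. c * f x) \<in> A)"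

definition weighted_framework ::
  "('a \<Rightarrow> 'k::real_normed_field) set \<Rightarrow> ('m \<Rightarrow> ('a \<Rightarrow> 'k) set) \<Rightarrow>
   ('m \<Rightarrow> ('a \<Rightarrow> 'k) \<Rightarrow> 'w \<Rightarrow> 'k) \<Rightarrow> ('m \<Rightarrow> 'w set) \<Rightarrow> ('j \<Rightarrow> 'm \<Rightarrow> 'w \<Rightarrow> real) \<Rightarrow> bool" where
  "weighted_framework AP domT T \<omega> \<nu> \<longleftrightarrow>
     (\<forall>m. \<omega> m \<noteq> {}) \<and>
     (\<forall>j m x. x \<in> \<omega> m \<longrightarrow> \<nu> j m x \<ge> 0) \<and>
     (\<forall>m. \<forall>x\<in>\<omega> m. \<exists>j. \<nu> j m x > 0) \<and>
     fun_subspace AP \<and>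
     (\<forall>m. fun_subspace (domT m)) \<and>
     (\<forall>m. \<forall>f\<in>domT m. \<forall>g\<in>domT m. \<forall>x\<in>\<omega> m. T m (\<lambda>y. f y + g y) x = T m f x + T m g x) \<and>
     (\<forall>m c. \<forall>f\<in>domT m. \<forall>x\<in>\<omega> m. T m (\<lambda>y. c * f y) x = c * T m f x)"

definition fv_seminorm ::
  "('m \<Rightarrow> ('a \<Rightarrow> 'k::real_normed_field) \<Rightarrow> 'w \<Rightarrow> 'k) \<Rightarrow> ('m \<Rightarrow> 'w set) \<Rightarrow>
   ('j \<Rightarrow> 'm \<Rightarrow> 'w \<Rightarrow> real) \<Rightarrow> 'j \<Rightarrow> 'm \<Rightarrow> ('a \<Rightarrow> 'k) \<Rightarrow> real" where
  "fv_seminorm T \<omega> \<nu> j m f = (SUP x\<in>\<omega> m. norm (T m f x) * \<nu> j m x)"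

definition FV ::
  "('a \<Rightarrow> 'k::real_normed_field) set \<Rightarrow> ('m \<Rightarrow> ('a \<Rightarrow> 'k) set) \<Rightarrow>
   ('m \<Rightarrow> ('a \<Rightarrow> 'k) \<Rightarrow> 'w \<Rightarrow> 'k) \<Rightarrow> ('m \<Rightarrow> 'w set) \<Rightarrow> ('j \<Rightarrow> 'm \<Rightarrow> 'w \<Rightarrow> real) \<Rightarrow> ('a \<Rightarrow> 'k) set" where
  "FV AP domT T \<omega> \<nu> = {f. f \<in> AP \<and> (\<forall>m. f \<in> domT m) \<and>
       (\<forall>j m. bdd_above ((\<lambda>x. norm (T m f x) * \<nu> j m x) ` \<omega> m))}"

definition seminorm_topology ::
  "'v set \<Rightarrow> ('v \<Rightarrow> 'v \<Rightarrow> 'v) \<Rightarrow> ('i \<Rightarrow> 'v \<Rightarrow> real) \<Rightarrow> 'i set \<Rightarrow> 'v topology" where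
  "seminorm_topology V diff q I =
     topology_generated_by {{g \<in> V. q i (diff g f) < e} | f i e. f \<in> V \<and> i \<in> I \<and> e > 0}"

definition FV_top ::
  "('m \<Rightarrow> ('a \<Rightarrow> 'k::real_normed_field) \<Rightarrow> 'w \<Rightarrow> 'k) \<Rightarrow> ('m \<Rightarrow> 'w set) \<Rightarrow>
   ('j \<Rightarrow> 'm \<Rightarrow> 'w \<Rightarrow> real) \<Rightarrow> ('a \<Rightarrow> 'k) set \<Rightarrow> ('a \<Rightarrow> 'k) topology" where
  "FV_top T \<omega> \<nu> V = seminorm_topology V (\<lambda>g f. \<lambda>x. g x - f x)
      (\<lambda>(j, m). fv_seminorm T \<omega> \<nu> j m) UNIV"

text \<open>Topological dual of a space V of functions with topology tau: continuous linear
  functionals, represented extensionally (0 outside V).\<close>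
definition top_dual :: "('a \<Rightarrow> 'k::real_normed_field) set \<Rightarrow> ('a \<Rightarrow> 'k) topology \<Rightarrow> (('a \<Rightarrow> 'k) \<Rightarrow> 'k) set" where
  "top_dual V \<tau> = {y. (\<forall>f\<in>V. \<forall>g\<in>V. y (\<lambda>x. f x + g x) = y f + y g) \<and>
                      (\<forall>c. \<forall>f\<in>V. y (\<lambda>x. c * f x) = c * y f) \<and>
                      continuous_map \<tau> euclidean y \<and> (\<forall>f. f \<notin> V \<longrightarrow> y f = 0)}"

definition delta :: "('a \<Rightarrow> 'k::zero) set \<Rightarrow> 'a \<Rightarrow> ('a \<Rightarrow> 'k) \<Rightarrow> 'k" where
  "delta V x = (\<lambda>f. if f \<in> V then f x else 0)"

definition abs_convex :: "('a \<Rightarrow> 'k::real_normed_field) set \<Rightarrow> bool" where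
  "abs_convex K \<longleftrightarrow> (\<forall>f\<in>K. \<forall>g\<in>K. \<forall>a b. norm a + norm b \<le> 1 \<longrightarrow> (\<lambda>x. a * f x + b * g x) \<in> K)"

definition kappa_dual_top :: "('a \<Rightarrow> 'k::real_normed_field) set \<Rightarrow> ('a \<Rightarrow> 'k) topology \<Rightarrow> (('a \<Rightarrow> 'k) \<Rightarrow> 'k) topology" where
  "kappa_dual_top V \<tau> = seminorm_topology (top_dual V \<tau>) (\<lambda>y z. \<lambda>f. y f - z f)
      (\<lambda>K y. SUP f\<in>K. norm (y f)) {K. K \<noteq> {} \<and> K \<subseteq> V \<and> compactin \<tau> K \<and> abs_convex K}"

definition dom_space ::
  "('a \<Rightarrow> 'k::real_normed_field) set \<Rightarrow> ('m \<Rightarrow> ('a \<Rightarrow> 'k) set) \<Rightarrow>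
   ('m \<Rightarrow> ('a \<Rightarrow> 'k) \<Rightarrow> 'w \<Rightarrow> 'k) \<Rightarrow> ('m \<Rightarrow> 'w set) \<Rightarrow> ('j \<Rightarrow> 'm \<Rightarrow> 'w \<Rightarrow> real) \<Rightarrow> bool" where
  "dom_space AP domT T \<omega> \<nu> \<longleftrightarrow>
     (let V = FV AP domT T \<omega> \<nu>; \<tau> = FV_top T \<omega> \<nu> V in
       Hausdorff_space \<tau> \<and>
       (\<forall>j1 m1 j2 m2. \<exists>j m C. C > 0 \<and> (\<forall>f\<in>V.
           fv_seminorm T \<omega> \<nu> j1 m1 f \<le> C * fv_seminorm T \<omega> \<nu> j m f \<and>
           fv_seminorm T \<omega> \<nu> j2 m2 f \<le> C * fv_seminorm T \<omega> \<nu> j m f)) \<and>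
       (\<forall>x. delta V x \<in> top_dual V \<tau>))"

definition seminorm_on :: "('k::real_normed_field \<Rightarrow> 'e::ab_group_add \<Rightarrow> 'e) \<Rightarrow> ('e \<Rightarrow> real) \<Rightarrow> bool" where
  "seminorm_on sc p \<longleftrightarrow> (\<forall>x. p x \<ge> 0) \<and> (\<forall>c x. p (sc c x) = norm c * p x) \<and>
      (\<forall>x y. p (x + y) \<le> p x + p y)"

definition lc_top :: "('r \<Rightarrow> 'e::ab_group_add \<Rightarrow> real) \<Rightarrow> 'e topology" where
  "lc_top q = seminorm_topology UNIV (-) q UNIV"

definition lc_hausdorff_nontrivial :: "('k::real_normed_field \<Rightarrow> 'e::ab_group_add \<Rightarrow> 'e) \<Rightarrow> ('r \<Rightarrow> 'e \<Rightarrow> real) \<Rightarrow> bool" where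
  "lc_hausdorff_nontrivial sc q \<longleftrightarrow> vector_space sc \<and> (\<forall>i. seminorm_on sc (q i)) \<and>
      Hausdorff_space (lc_top q) \<and> (\<exists>e::'e. e \<noteq> 0)"

definition eps_product ::
  "('a \<Rightarrow> 'k::real_normed_field) set \<Rightarrow> ('a \<Rightarrow> 'k) topology \<Rightarrow>
   ('k \<Rightarrow> 'e::ab_group_add \<Rightarrow> 'e) \<Rightarrow> ('r \<Rightarrow> 'e \<Rightarrow> real) \<Rightarrow> ((('a \<Rightarrow> 'k) \<Rightarrow> 'k) \<Rightarrow> 'e) set" where
  "eps_product V \<tau> sc q = {u.
      (\<forall>y\<in>top_dual V \<tau>. \<forall>z\<in>top_dual V \<tau>. u (\<lambda>f. y f + z f) = u y + u z) \<and>
      (\<forall>c. \<forall>y\<in>top_dual V \<tau>. u (\<lambda>f. c * y f) = sc c (u y)) \<and>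
      continuous_map (kappa_dual_top V \<tau>) (lc_top q) u}"

end

theory Submission
  imports Defs
begin

lemma eps_product_continuous_map:
  assumes "u \<in> eps_product V \<tau> sc q"
  shows "continuous_map (kappa_dual_top V \<tau>) (lc_top q) u"
  using assms unfolding eps_product_def by blast

theorem proposition4p1:
  fixes AP :: "('a::t2_space \<Rightarrow> 'k::real_normed_field) set"
    and domT :: "'m \<Rightarrow> ('a \<Rightarrow> 'k) set"
    and T :: "'m \<Rightarrow> ('a \<Rightarrow> 'k) \<Rightarrow> 'w \<Rightarrow> 'k"
    and \<omega> :: "'m \<Rightarrow> 'w set"
    and \<nu> :: "'j \<Rightarrow> 'm \<Rightarrow> 'w \<Rightarrow> real"
    and sc :: "'k \<Rightarrow> 'e::ab_group_add \<Rightarrow> 'e"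
    and q :: "'r \<Rightarrow> 'e \<Rightarrow> real"
    and u :: "(('a \<Rightarrow> 'k) \<Rightarrow> 'k) \<Rightarrow> 'e"
  assumes "weighted_framework AP domT T \<omega> \<nu>"
    and "dom_space AP domT T \<omega> \<nu>"
    and "FV AP domT T \<omega> \<nu> \<subseteq> {f. continuous_on UNIV f}"
    and "lc_hausdorff_nontrivial sc q"
    and "continuous_map euclidean
           (kappa_dual_top (FV AP domT T \<omega> \<nu>) (FV_top T \<omega> \<nu> (FV AP domT T \<omega> \<nu>)))
           (delta (FV AP domT T \<omega> \<nu>))"
    and "u \<in> eps_product (FV AP domT T \<omega> \<nu>) (FV_top T \<omega> \<nu> (FV AP domT T \<omega> \<nu>)) sc q"
  shows "continuous_map euclidean (lc_top q) (\<lambda>x. u (delta (FV AP domT T \<omega> \<nu>) x))"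
proof -
  have "continuous_map euclidean (lc_top q) (u \<circ> delta (FV AP domT T \<omega> \<nu>))"
    using continuous_map_compose[OF assms(5) eps_product_continuous_map[OF assms(6)]] .
  then show ?thesis
    by (simp add: o_def)
qed

end
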